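(* Let $G$ be a proper interval graph with a proper vertex ordering $<$ and let $M$ be a uniquely restricted matching in $G$ starting with an edge $e'\in E(G)$. Let $e\in E(G)$ be such that $r(e)<l(e')$ and $\{e,e'\}$ is a uniquely restricted matching in $G$. Then $\{e\}\cup M$ is a uniquely restricted matching in $G$ starting with $e$.
   Context: Graphs are finite, simple, undirected. A proper interval graph is a graph with an interval representation (closed real intervals, adjacency iff intersection for distinct vertices) in which no interval strictly contains another. An ordering $<$ of $V(G)$ is a proper vertex ordering if for all $u<v<w$, $uw\in E(G)$ implies $uv,vw\in E(G)$. For an edge $e=uv$, $l(e)=\min_<\{u,v\}$ and $r(e)=\max_<\{u,v\}$. A matching is a set of pairwise vertex-disjoint edges; it is uniquely restricted if no other matching of $G$ matches exactly the same vertex set. For a uniquely restricted matching $M$ in such $G$, its edges can be labelled $e_1,\dots,e_{|M|}$ with $l(e_1)<r(e_1)<l(e_2)<r(e_2)<\cdots<l(e_{|M|})<r(e_{|M|})$, and $M$ is said to start with $e_1$ (the edge of $M$ with the $<$-smallest $l$-value). *)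

theory Defs
  imports Main "HOL-Library.Disjoint_Sets" Complex_Main
begin

definition simple_graph :: "'a set \<Rightarrow> 'a set set \<Rightarrow> bool" where
  "simple_graph V E \<longleftrightarrow> finite V \<and> (\<forall>e\<in>E. e \<subseteq> V \<and> card e = 2)"

definition proper_interval_graph :: "'a set \<Rightarrow> 'a set set \<Rightarrow> bool" where
  "proper_interval_graph V E \<longleftrightarrow>
     (\<exists>a b :: 'a \<Rightarrow> real.
        (\<forall>v\<in>V. a v \<le> b v) \<and>
        (\<forall>u\<in>V. \<forall>v\<in>V. u \<noteq> v \<longrightarrow>
            ({u, v} \<in> E \<longleftrightarrow> {a u..b u} \<inter> {a v..b v} \<noteq> {})) \<and>
        (\<forall>u\<in>V. \<forall>v\<in>V. \<not> ({a u..b u} \<subset> {a v..b v})))"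

definition strict_linear_order_on :: "'a set \<Rightarrow> ('a \<Rightarrow> 'a \<Rightarrow> bool) \<Rightarrow> bool" where
  "strict_linear_order_on V lt \<longleftrightarrow>
     (\<forall>x\<in>V. \<not> lt x x) \<and>
     (\<forall>x\<in>V. \<forall>y\<in>V. \<forall>z\<in>V. lt x y \<longrightarrow> lt y z \<longrightarrow> lt x z) \<and>
     (\<forall>x\<in>V. \<forall>y\<in>V. x \<noteq> y \<longrightarrow> lt x y \<or> lt y x)"

definition proper_vertex_ordering :: "'a set \<Rightarrow> 'a set set \<Rightarrow> ('a \<Rightarrow> 'a \<Rightarrow> bool) \<Rightarrow> bool" where
  "proper_vertex_ordering V E lt \<longleftrightarrow>
     strict_linear_order_on V lt \<and>
     (\<forall>u\<in>V. \<forall>v\<in>V. \<forall>w\<in>V. lt u v \<longrightarrow> lt v w \<longrightarrow> {u, w} \<in> E \<longrightarrow>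
         {u, v} \<in> E \<and> {v, w} \<in> E)"

definition lv :: "('a \<Rightarrow> 'a \<Rightarrow> bool) \<Rightarrow> 'a set \<Rightarrow> 'a" where
  "lv lt e = (THE u. u \<in> e \<and> (\<forall>w\<in>e. w \<noteq> u \<longrightarrow> lt u w))"

definition rv :: "('a \<Rightarrow> 'a \<Rightarrow> bool) \<Rightarrow> 'a set \<Rightarrow> 'a" where
  "rv lt e = (THE u. u \<in> e \<and> (\<forall>w\<in>e. w \<noteq> u \<longrightarrow> lt w u))"

definition matching :: "'a set set \<Rightarrow> 'a set set \<Rightarrow> bool" where
  "matching E M \<longleftrightarrow> M \<subseteq> E \<and> (\<forall>e\<in>M. \<forall>f\<in>M. e \<noteq> f \<longrightarrow> e \<inter> f = {})"

definition uniquely_restricted :: "'a set set \<Rightarrow> 'a set set \<Rightarrow> bool" where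
  "uniquely_restricted E M \<longleftrightarrow> matching E M \<and>
     (\<forall>M'. matching E M' \<and> \<Union>M' = \<Union>M \<longrightarrow> M' = M)"

definition starts_with :: "('a \<Rightarrow> 'a \<Rightarrow> bool) \<Rightarrow> 'a set set \<Rightarrow> 'a set \<Rightarrow> bool" where
  "starts_with lt M e \<longleftrightarrow> e \<in> M \<and> (\<forall>f\<in>M. f \<noteq> e \<longrightarrow> lt (lv lt e) (lv lt f))"

end

theory Submission
  imports Defs
begin

text \<open>Write \<open>e = {a, b}\<close>, \<open>e' = {c, d}\<close> with \<open>a < b < c < d\<close>; every vertex covered by \<open>M\<close>
  is \<open>\<ge> c\<close>. Suppose a matching \<open>M'\<close> covers \<open>e \<union> \<Union>M\<close> but avoids \<open>e\<close>, matching \<open>a\<close> to \<open>x\<close> and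
  \<open>b\<close> to \<open>y\<close>. By the umbrella property of the ordering \<open>xy\<close> is an edge, and replacing \<open>ax, by\<close>
  by \<open>xy\<close> gives a matching covering \<open>\<Union>M\<close>, so \<open>xy \<in> M\<close>. If \<open>xy = e'\<close>, then \<open>ax, by\<close> is a second
  perfect matching of \<open>e \<union> e'\<close>. Otherwise \<open>c < x, y\<close>: if \<open>d < x\<close> (or \<open>d < y\<close>) the umbrella
  property yields \<open>ad, bc\<close> (or \<open>ac, bd\<close>), again a second perfect matching of \<open>e \<union> e'\<close>; if
  \<open>x, y < d\<close> it yields \<open>cx, yd\<close>, a second matching of \<open>M\<close> on the same vertices.\<close>

lemma matching_mono: "matching E M \<Longrightarrow> N \<subseteq> M \<Longrightarrow> matching E N"
  unfolding matching_def by blast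

lemma matching_edges: "matching E M \<Longrightarrow> M \<subseteq> E"
  unfolding matching_def by blast

lemma matching_disjoint: "matching E M \<Longrightarrow> f \<in> M \<Longrightarrow> g \<in> M \<Longrightarrow> f \<noteq> g \<Longrightarrow> f \<inter> g = {}"
  unfolding matching_def by blast

lemma matching_insert:
  "matching E M \<Longrightarrow> h \<in> E \<Longrightarrow> h \<inter> \<Union>M = {} \<Longrightarrow> matching E (insert h M)"
  unfolding matching_def by blast

lemma matching_Union_disjoint_diff:
  "matching E M \<Longrightarrow> F \<subseteq> M \<Longrightarrow> \<Union>F \<inter> \<Union>(M - F) = {}"
  unfolding matching_def by fastforce

lemma uniquely_restricted_matching: "uniquely_restricted E M \<Longrightarrow> matching E M"
  unfolding uniquely_restricted_def by blast

lemma uniquely_restricted_unique: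
  "uniquely_restricted E M \<Longrightarrow> matching E M' \<Longrightarrow> \<Union>M' = \<Union>M \<Longrightarrow> M' = M"
  unfolding uniquely_restricted_def by blast

lemma matching_exchange:
  assumes "matching E M" "f1 \<in> M" "f2 \<in> M"
    and "g1 \<in> E" "g2 \<in> E" "g1 \<inter> g2 = {}" "g1 \<union> g2 = f1 \<union> f2"
  shows "matching E (insert g1 (insert g2 (M - {f1, f2})))"
    and "\<Union>(insert g1 (insert g2 (M - {f1, f2}))) = \<Union>M"
proof -
  have disj: "(f1 \<union> f2) \<inter> \<Union>(M - {f1, f2}) = {}"
    using matching_Union_disjoint_diff[OF assms(1), of "{f1, f2}"] assms(2,3) by simp
  have g2: "g2 \<inter> \<Union>(M - {f1, f2}) = {}" and g1: "g1 \<inter> \<Union>(insert g2 (M - {f1, f2})) = {}"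
    using disj assms(6,7) by blast+
  have "matching E (M - {f1, f2})" using matching_mono[OF assms(1)] by blast
  then show "matching E (insert g1 (insert g2 (M - {f1, f2})))"
    using matching_insert assms(4,5) g1 g2 by metis
  show "\<Union>(insert g1 (insert g2 (M - {f1, f2}))) = \<Union>M"
    using assms(2,3,7) by blast
qed

lemma uniquely_restricted_exchange:
  assumes "uniquely_restricted E M" "f1 \<in> M" "f2 \<in> M"
    and "g1 \<in> E" "g2 \<in> E" "g1 \<inter> g2 = {}" "g1 \<union> g2 = f1 \<union> f2"
  shows "g1 \<in> M"
proof -
  from matching_exchange[OF uniquely_restricted_matching[OF assms(1)] assms(2-)]
  have "insert g1 (insert g2 (M - {f1, f2})) = M"
    using uniquely_restricted_unique[OF assms(1)] by blast
  then show ?thesis by blast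
qed

lemma uniquely_restricted_no_cross:
  assumes "uniquely_restricted E M" "{a, b} \<in> M" "{z, w} \<in> M" "{a, b} \<inter> {z, w} = {}"
    and "a \<noteq> b" "z \<noteq> w" "{a, z} \<in> E" "{b, w} \<in> E"
  shows False
proof -
  have "{a, z} \<inter> {b, w} = {}" "{a, z} \<union> {b, w} = {a, b} \<union> {z, w}"
    using assms(4-6) by auto
  then have "{a, z} \<in> M"
    using uniquely_restricted_exchange[OF assms(1-3,7,8)] by blast
  moreover have "{a, z} \<noteq> {a, b}" "a \<in> {a, z} \<inter> {a, b}" using assms(4) by auto
  ultimately show False
    using matching_disjoint[OF uniquely_restricted_matching[OF assms(1)] _ assms(2)] by blast
qed

lemma matching_contract:
  assumes "matching E M" "g1 \<in> M" "g2 \<in> M" "h \<in> E" "h \<subseteq> g1 \<union> g2"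
  shows "matching E (insert h (M - {g1, g2}))"
    and "\<Union>(insert h (M - {g1, g2})) = \<Union>M - (g1 \<union> g2) \<union> h"
proof -
  have disj: "(g1 \<union> g2) \<inter> \<Union>(M - {g1, g2}) = {}"
    using matching_Union_disjoint_diff[OF assms(1), of "{g1, g2}"] assms(2,3) by auto
  have "matching E (M - {g1, g2})" using matching_mono[OF assms(1)] by blast
  moreover have "h \<inter> \<Union>(M - {g1, g2}) = {}" using disj assms(5) by blast
  ultimately show "matching E (insert h (M - {g1, g2}))"
    using matching_insert assms(4) by metis
  show "\<Union>(insert h (M - {g1, g2})) = \<Union>M - (g1 \<union> g2) \<union> h"
    using disj assms(2,3) by blast
qed

locale ordered_graph =
  fixes V :: "'a set" and E :: "'a set set" and lt :: "'a \<Rightarrow> 'a \<Rightarrow> bool"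
  assumes simple: "simple_graph V E"
    and ordering: "proper_vertex_ordering V E lt"
begin

abbreviation le :: "'a \<Rightarrow> 'a \<Rightarrow> bool" where
  "le u v \<equiv> u = v \<or> lt u v"

lemma lt_irrefl: "v \<in> V \<Longrightarrow> \<not> lt v v"
  using ordering unfolding proper_vertex_ordering_def strict_linear_order_on_def by blast

lemma lt_trans: "u \<in> V \<Longrightarrow> v \<in> V \<Longrightarrow> w \<in> V \<Longrightarrow> lt u v \<Longrightarrow> lt v w \<Longrightarrow> lt u w"
  using ordering unfolding proper_vertex_ordering_def strict_linear_order_on_def by blast

lemma lt_total: "u \<in> V \<Longrightarrow> v \<in> V \<Longrightarrow> u \<noteq> v \<Longrightarrow> lt u v \<or> lt v u"
  using ordering unfolding proper_vertex_ordering_def strict_linear_order_on_def by blast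

lemma lt_le_trans: "u \<in> V \<Longrightarrow> v \<in> V \<Longrightarrow> w \<in> V \<Longrightarrow> lt u v \<Longrightarrow> le v w \<Longrightarrow> lt u w"
  using lt_trans by blast

lemma le_lt_trans: "u \<in> V \<Longrightarrow> v \<in> V \<Longrightarrow> w \<in> V \<Longrightarrow> le u v \<Longrightarrow> lt v w \<Longrightarrow> lt u w"
  using lt_trans by blast

lemma umbrella:
  "u \<in> V \<Longrightarrow> v \<in> V \<Longrightarrow> w \<in> V \<Longrightarrow> lt u v \<Longrightarrow> lt v w \<Longrightarrow> {u, w} \<in> E
    \<Longrightarrow> {u, v} \<in> E \<and> {v, w} \<in> E"
  using ordering unfolding proper_vertex_ordering_def by blast

lemma edge_subset_vertices: "f \<in> E \<Longrightarrow> f \<subseteq> V"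
  using simple unfolding simple_graph_def by blast

lemma edge_ends_distinct: "{u, w} \<in> E \<Longrightarrow> u \<noteq> w"
  using simple unfolding simple_graph_def by fastforce

lemma Union_matching_subset: "matching E M \<Longrightarrow> \<Union>M \<subseteq> V"
  using edge_subset_vertices unfolding matching_def by blast

lemma edge_other_end:
  assumes "f \<in> E" "v \<in> f"
  obtains w where "f = {v, w}" "w \<noteq> v" "w \<in> V"
proof -
  have "card f = 2" using assms(1) simple unfolding simple_graph_def by blast
  then obtain p q where "f = {p, q}" "p \<noteq> q" by (meson card_2_iff)
  then show ?thesis
    using that assms edge_subset_vertices by (auto simp: insert_commute)
qed

lemma lv_rv_doubleton:
  assumes "u \<in> V" "w \<in> V" "lt u w"
  shows "lv lt {u, w} = u" and "rv lt {u, w} = w"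
proof -
  have "\<not> lt w u" "u \<noteq> w" using assms lt_irrefl lt_trans by blast+
  then show "lv lt {u, w} = u"
    unfolding lv_def using assms(3) by (intro the_equality) auto
  show "rv lt {u, w} = w"
    unfolding rv_def using assms(3) \<open>\<not> lt w u\<close> \<open>u \<noteq> w\<close> by (intro the_equality) auto
qed

lemma edge_lv_rv:
  assumes "f \<in> E"
  obtains u w where "f = {u, w}" "lt u w" "u \<in> V" "w \<in> V" "lv lt f = u" "rv lt f = w"
proof -
  have "f \<noteq> {}" using assms simple unfolding simple_graph_def by fastforce
  then obtain p where "p \<in> f" by blast
  then obtain q where pq: "f = {p, q}" "q \<noteq> p" "q \<in> V"
    using edge_other_end[OF assms] by blast
  then have "p \<in> V" using assms edge_subset_vertices by blast
  with pq lt_total consider "lt p q" | "lt q p" by blast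
  then show ?thesis
    using that pq \<open>p \<in> V\<close> lv_rv_doubleton by cases (auto simp: insert_commute)
qed

lemma edge_nested:
  assumes "{u, w} \<in> E" "u' \<in> V" "w' \<in> V" "le u u'" "lt u' w'" "le w' w"
  shows "{u', w'} \<in> E"
proof -
  have uw: "u \<in> V" "w \<in> V" using assms(1) edge_subset_vertices by auto
  have "{u', w} \<in> E"
    using assms uw umbrella[of u u' w] lt_le_trans[of u' w' w] by blast
  then show ?thesis
    using assms uw umbrella[of u' w' w] by blast
qed

lemma edges_crossing_inner:
  assumes "{a, x} \<in> E" "{b, y} \<in> E" "lt a y" "lt b x" "x \<in> V" "y \<in> V" "x \<noteq> y"
  shows "{x, y} \<in> E"
proof (cases "lt x y")
  case True
  then show ?thesis using edge_nested[OF assms(2)] assms(4-6) by blast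
next
  case False
  then have "lt y x" using lt_total[OF assms(5-7)] by blast
  then have "{y, x} \<in> E" using edge_nested[OF assms(1)] assms(3,5,6) by blast
  then show ?thesis by (simp add: insert_commute)
qed

lemma Union_starts_with_ge:
  assumes "matching E M" "starts_with lt M e'" "v \<in> \<Union>M"
  shows "le (lv lt e') v"
proof -
  obtain f where f: "f \<in> M" "v \<in> f" using assms(3) by blast
  have "f \<in> E" "e' \<in> E" using assms(1,2) f(1) matching_edges unfolding starts_with_def by blast+
  obtain p q where pq: "f = {p, q}" "lt p q" "p \<in> V" "q \<in> V" "lv lt f = p"
    using \<open>f \<in> E\<close> by (rule edge_lv_rv)
  obtain c where "c \<in> V" "lv lt e' = c" using \<open>e' \<in> E\<close> by (rule edge_lv_rv)
  have "le c p"
  proof (cases "f = e'")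
    case True
    then show ?thesis using pq(5) \<open>lv lt e' = c\<close> by simp
  next
    case False
    then show ?thesis
      using assms(2) f(1) pq(5) \<open>lv lt e' = c\<close> unfolding starts_with_def by blast
  qed
  moreover have "v = p \<or> v = q" using f(2) pq(1) by blast
  ultimately show ?thesis
    using pq(2-4) \<open>c \<in> V\<close> \<open>lv lt e' = c\<close> le_lt_trans[of c p q] by blast
qed

lemma edge_precedes_Union:
  assumes "matching E M" "starts_with lt M e'" "e \<in> E" "lt (rv lt e) (lv lt e')"
    and "u \<in> e" "v \<in> \<Union>M"
  shows "lt u v"
proof -
  obtain a b where ab: "e = {a, b}" "lt a b" "a \<in> V" "b \<in> V" "rv lt e = b"
    using assms(3) by (rule edge_lv_rv)
  have "e' \<in> E" using assms(1,2) matching_edges unfolding starts_with_def by blast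
  then obtain c where c: "c \<in> V" "lv lt e' = c" by (rule edge_lv_rv)
  have "lt b c" using ab(5) c(2) assms(4) by simp
  then have "lt b v"
    using Union_starts_with_ge[OF assms(1,2,6)] Union_matching_subset[OF assms(1)] assms(6)
      ab(4) c lt_le_trans by blast
  then show ?thesis
    using assms(5,6) ab(1-4) Union_matching_subset[OF assms(1)] lt_trans by blast
qed

lemma starts_with_insert:
  assumes "matching E M" "starts_with lt M e'" "e \<in> E" "lt (rv lt e) (lv lt e')"
  shows "starts_with lt (insert e M) e" and "e \<inter> \<Union>M = {}"
proof -
  note precedes = edge_precedes_Union[OF assms]
  then show "e \<inter> \<Union>M = {}"
    using assms(3) edge_subset_vertices lt_irrefl by blast
  have "lt (lv lt e) (lv lt f)" if "f \<in> M" for f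
  proof -
    have "f \<in> E" using assms(1) that matching_edges by blast
    then have "lv lt f \<in> f" by (rule edge_lv_rv) auto
    moreover have "lv lt e \<in> e" using assms(3) by (rule edge_lv_rv) auto
    ultimately show ?thesis using precedes that by blast
  qed
  then show "starts_with lt (insert e M) e"
    unfolding starts_with_def by auto
qed

lemma crossing_partners_impossible:
  assumes M: "uniquely_restricted E M" "starts_with lt M e'"
    and ee': "uniquely_restricted E {e, e'}"
    and e: "e = {a, b}" "lt a b" "lt b (lv lt e')"
    and partners: "{a, x} \<in> E" "{b, y} \<in> E" "{x, y} \<in> M"
  shows False
proof -
  have mM: "matching E M" using M(1) by (rule uniquely_restricted_matching)
  have "e \<in> E" "e' \<in> E" using matching_edges[OF uniquely_restricted_matching[OF ee']] by auto
  obtain c d where cd: "e' = {c, d}" "lt c d" "c \<in> V" "d \<in> V" "lv lt e' = c"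
    using \<open>e' \<in> E\<close> by (rule edge_lv_rv)
  have ab: "a \<in> V" "b \<in> V" using \<open>e \<in> E\<close> e(1) edge_subset_vertices by auto
  have "{x, y} \<in> E" using mM partners(3) matching_edges by blast
  then have xy: "x \<in> \<Union>M" "y \<in> \<Union>M" "x \<in> V" "y \<in> V" "x \<noteq> y"
    using partners(3) edge_subset_vertices edge_ends_distinct by auto
  have cx: "le c x" and cy: "le c y"
    using Union_starts_with_ge[OF mM M(2)] xy(1,2) cd(5) by auto
  have bc: "lt b c" using e(3) cd(5) by simp
  have ac: "lt a c" using lt_trans[OF ab cd(3) e(2) bc] .
  have acE: "{a, c} \<in> E" using edge_nested[OF partners(1)] ab cd ac cx by blast
  have bcE: "{b, c} \<in> E" using edge_nested[OF partners(2)] ab cd bc cy by blast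
  have ee'_disj: "e \<inter> e' = {}"
    using e(1) ab cd ac bc lt_irrefl lt_trans[of a c d] lt_trans[of b c d] by auto
  have "a \<noteq> b" "c \<noteq> d" using e(2) cd(2,3) ab lt_irrefl by blast+
  have split_impossible: False if "{a, z} \<in> E" "{b, w} \<in> E" "{z, w} = e'" for z w
    using uniquely_restricted_no_cross[OF ee' _ _ _ \<open>a \<noteq> b\<close> _ that(1,2)]
      ee'_disj that(3) \<open>c \<noteq> d\<close> e(1) cd(1) by (auto simp: doubleton_eq_iff)
  have e'M: "e' \<in> M" using M(2) unfolding starts_with_def by blast
  have cdE: "{c, d} \<in> E" using \<open>e' \<in> E\<close> cd(1) by simp
  have ad: "lt a d" and bd: "lt b d"
    using lt_trans[OF ab(1) cd(3,4) ac cd(2)] lt_trans[OF ab(2) cd(3,4) bc cd(2)] .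
  show False
  proof (cases "{x, y} = e'")
    case True
    show False by (rule split_impossible[OF partners(1,2) True])
  next
    case False
    then have xy_disj: "e' \<inter> {x, y} = {}" using matching_disjoint[OF mM e'M partners(3)] by blast
    then have x_inner: "x \<noteq> c" "x \<noteq> d" and y_inner: "y \<noteq> c" "y \<noteq> d"
      using cd(1) by auto
    consider "lt d x" | "lt d y" | "lt x d" "lt y d"
      using lt_total[OF xy(3) cd(4)] lt_total[OF xy(4) cd(4)] x_inner(2) y_inner(2) by blast
    then show False
    proof cases
      case 1
      then have adE: "{a, d} \<in> E" using edge_nested[OF partners(1) ab(1) cd(4) _ ad] by blast
      have "{d, c} = e'" using cd(1) by (simp add: insert_commute)
      then show False by (rule split_impossible[OF adE bcE])
    next
      case 2
      then have bdE: "{b, d} \<in> E" using edge_nested[OF partners(2) ab(2) cd(4) _ bd] by blast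
      show False by (rule split_impossible[OF acE bdE cd(1)[symmetric]])
    next
      case 3
      have "{c, x} \<in> E" "{d, y} \<in> E"
        using edge_nested[OF cdE cd(3) xy(3)] edge_nested[OF cdE xy(4) cd(4)]
          3 cx cy x_inner(1) y_inner(1) by (auto simp: insert_commute)
      then show False
        using uniquely_restricted_no_cross[OF M(1) e'M[unfolded cd(1)] partners(3)]
          xy_disj cd(1) \<open>c \<noteq> d\<close> xy(5) by blast
    qed
  qed
qed

lemma cover_avoiding_edge_impossible:
  assumes M: "uniquely_restricted E M" "starts_with lt M e'"
    and e: "lt (rv lt e) (lv lt e')" "uniquely_restricted E {e, e'}"
    and M': "matching E M'" "\<Union>M' = e \<union> \<Union>M" "e \<notin> M'"
  shows False
proof -
  have mM: "matching E M" using M(1) by (rule uniquely_restricted_matching)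
  have "e \<in> E" using matching_edges[OF uniquely_restricted_matching[OF e(2)]] by auto
  obtain a b where ab: "e = {a, b}" "lt a b" "a \<in> V" "b \<in> V" "rv lt e = b"
    using \<open>e \<in> E\<close> by (rule edge_lv_rv)
  have e_disj: "e \<inter> \<Union>M = {}"
    using starts_with_insert(2)[OF mM M(2) \<open>e \<in> E\<close> e(1)] .
  have M'E: "M' \<subseteq> E" using M'(1) by (rule matching_edges)
  obtain g where g: "g \<in> M'" "a \<in> g" using M'(2) ab(1) by auto
  obtain x where x: "g = {a, x}" "x \<noteq> a" "x \<in> V" using g M'E by (blast elim: edge_other_end)
  obtain g2 where g2: "g2 \<in> M'" "b \<in> g2" using M'(2) ab(1) by auto
  obtain y where y: "g2 = {b, y}" "y \<noteq> b" "y \<in> V" using g2 M'E by (blast elim: edge_other_end)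
  have "x \<noteq> b" using M'(3) g x ab(1) by auto
  then have "b \<notin> g" using x(1) ab(2,4) lt_irrefl by auto
  then have "g \<inter> g2 = {}" using matching_disjoint[OF M'(1) g(1) g2(1)] g2(2) by blast
  then have "y \<noteq> a" "x \<noteq> y" using g(2) x(1) y(1) by auto
  then have xyM: "x \<in> \<Union>M" "y \<in> \<Union>M"
    using M'(2) g g2 x(1,2) y(1,2) \<open>x \<noteq> b\<close> ab(1) by auto
  have bx: "lt b x" and "lt a y"
    using edge_precedes_Union[OF mM M(2) \<open>e \<in> E\<close> e(1)] xyM ab(1) by blast+
  have partners: "{a, x} \<in> E" "{b, y} \<in> E" using g(1) g2(1) x(1) y(1) M'E by auto
  then have xyE: "{x, y} \<in> E"
    using edges_crossing_inner bx \<open>lt a y\<close> x(3) y(3) \<open>x \<noteq> y\<close> by blast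
  have "{x, y} \<subseteq> g \<union> g2" using x y by auto
  note collapse = matching_contract[OF M'(1) g(1) g2(1) xyE this]
  have "\<Union>(insert {x, y} (M' - {g, g2})) = \<Union>M"
    using collapse(2) M'(2) e_disj ab(1) x(1) y(1) xyM by auto
  then have "{x, y} \<in> M"
    using uniquely_restricted_unique[OF M(1) collapse(1)] by blast
  then show False
    using crossing_partners_impossible[OF M e(2) ab(1,2) _ partners] e(1) ab(5) by simp
qed

lemma uniquely_restricted_insert:
  assumes M: "uniquely_restricted E M" "starts_with lt M e'"
    and e: "lt (rv lt e) (lv lt e')" "uniquely_restricted E {e, e'}"
  shows "uniquely_restricted E (insert e M)"
proof -
  have mM: "matching E M" using M(1) by (rule uniquely_restricted_matching)
  have "e \<in> E" using matching_edges[OF uniquely_restricted_matching[OF e(2)]] by auto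
  have e_disj: "e \<inter> \<Union>M = {}"
    using starts_with_insert(2)[OF mM M(2) \<open>e \<in> E\<close> e(1)] .
  have "M' = insert e M" if M': "matching E M'" "\<Union>M' = \<Union>(insert e M)" for M'
  proof (cases "e \<in> M'")
    case True
    have "e \<inter> \<Union>(M' - {e}) = {}"
      using matching_Union_disjoint_diff[OF M'(1), of "{e}"] True by simp
    then have "\<Union>(M' - {e}) = \<Union>M' - e" using True by blast
    also have "\<dots> = \<Union>M" using M'(2) e_disj by auto
    finally have "\<Union>(M' - {e}) = \<Union>M" .
    moreover have "matching E (M' - {e})" using matching_mono[OF M'(1)] by blast
    ultimately have "M' - {e} = M" using uniquely_restricted_unique[OF M(1)] by blast
    then show ?thesis using True by blast
  next
    case False
    moreover have "\<Union>M' = e \<union> \<Union>M" using M'(2) by simp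
    ultimately show ?thesis using cover_avoiding_edge_impossible[OF M e M'(1)] by blast
  qed
  then show ?thesis
    using matching_insert[OF mM \<open>e \<in> E\<close> e_disj] unfolding uniquely_restricted_def by blast
qed

end

theorem corollary1:
  fixes V :: "'a set" and E :: "'a set set" and lt :: "'a \<Rightarrow> 'a \<Rightarrow> bool"
    and M :: "'a set set" and e e' :: "'a set"
  assumes "simple_graph V E"
    and "proper_interval_graph V E"
    and "proper_vertex_ordering V E lt"
    and "uniquely_restricted E M"
    and "e' \<in> E"
    and "starts_with lt M e'"
    and "e \<in> E"
    and "lt (rv lt e) (lv lt e')"
    and "uniquely_restricted E {e, e'}"
  shows "uniquely_restricted E (insert e M) \<and> starts_with lt (insert e M) e"
proof -
  interpret ordered_graph V E lt using assms(1,3) by unfold_locales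
  have "matching E M" using assms(4) by (rule uniquely_restricted_matching)
  then show ?thesis
    using uniquely_restricted_insert[OF assms(4,6,8,9)]
      starts_with_insert(1)[OF _ assms(6,7,8)] by blast
qed

end
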